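(* For every integer $d>2$, the number of $(d,d)$-necklaces (circular arrangements of $d$ white and $d$ black beads, modulo cyclic rotation, with no primitivity requirement) is even. *)

theory Defs
  imports Main
begin

text \<open>Binary words of length 2d with exactly d white beads (True) and d black beads (False).\<close>
definition balanced_words :: "nat \<Rightarrow> bool list set" where
  "balanced_words d = {w. length w = 2 * d \<and> count_list w True = d}"

definition rot_rel :: "nat \<Rightarrow> (bool list \<times> bool list) set" where
  "rot_rel d = {(u, v). u \<in> balanced_words d \<and> v \<in> balanced_words d \<and> (\<exists>k. v = rotate k u)}"

definition necklaces :: "nat \<Rightarrow> bool list set set" where
  "necklaces d = balanced_words d // rot_rel d"

end

theory Submission
  imports Defs "HOL-Number_Theory.Number_Theory" "HOL-Library.Z2" "HOL-Library.Disjoint_Sets"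
begin

(* Swapping the two colours is an involution on the (d,d)-necklaces, so their number has the
   parity of the number S of self-complementary necklaces.  Counting the pairs (j, w) of a
   rotation j < 2d and a word w of length 2d with rotate j w = map Not w in two ways gives
     2d * S = sum over g dvd 2d with 2d/g even of totient (2d/g) * 2^g,
   because such words exist only when 2d / gcd j (2d) is even, and are then determined by their
   first gcd j (2d) letters.  Writing d = 2^a * m with m odd, each term with g >= 3 is divisible
   by 2^(a+2), and so is the sum of the terms g = 1 and g = 2.  Hence 2^(a+2) divides
   2^(a+1) * m * S, and S is even. *)

lemma even_card_iff_even_card_fixpoints:
  assumes "finite A" "\<And>x. x \<in> A \<Longrightarrow> f x \<in> A" "\<And>x. x \<in> A \<Longrightarrow> f (f x) = x"
  shows "even (card A) \<longleftrightarrow> even (card {x \<in> A. f x = x})"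
proof -
  let ?M = "{x \<in> A. f x \<noteq> x}"
  \<comment> \<open>the points moved by \<open>f\<close> pair off, and \<open>1 + 1 = 0\<close> in \<open>bit\<close>\<close>
  have "(\<Sum>x\<in>?M. 1 :: bit) = 0"
  proof (rule sum_involution_eq_0[where h = f])
    show "(1::bit) + 1 = 0" by simp
  qed (use assms in force)+
  then have "even (of_nat (card ?M) :: bit)"
    by simp
  then have "even (card ?M)"
    by (simp only: even_of_nat_iff)
  moreover have "card A = card {x \<in> A. f x = x} + card ?M"
    using assms(1) by (subst card_Un_disjoint[symmetric]) (auto intro: arg_cong[where f = card])
  ultimately show ?thesis by simp
qed

section \<open>Rotation classes of words\<close>

lemma rotate_inverse: "rotate (length w - k mod length w) (rotate k w) = w"
proof (cases "w = []")
  case False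
  have "rotate (length w - k mod length w) (rotate k w)
          = rotate (length w - k mod length w) (rotate (k mod length w) w)"
    by (simp flip: rotate_conv_mod)
  also have "\<dots> = rotate (length w) w"
    using False by (simp add: rotate_rotate)
  finally show ?thesis by simp
qed simp

lemma inj_rotate: "inj (rotate k)"
  by (rule injI) (metis length_rotate rotate_inverse)

definition rotations :: "'a list \<Rightarrow> 'a list set" where
  "rotations w = range (\<lambda>k. rotate k w)"

lemma rotate_in_rotations [simp]: "rotate k w \<in> rotations w"
  by (simp add: rotations_def)

lemma self_in_rotations [simp]: "w \<in> rotations w"
  using rotate_in_rotations[of 0 w] by simp

lemma length_rotations: "v \<in> rotations w \<Longrightarrow> length v = length w"
  by (auto simp: rotations_def)

lemma rotations_rotate [simp]: "rotations (rotate k w) = rotations w"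
proof
  show "rotations (rotate k w) \<subseteq> rotations w"
    by (auto simp: rotations_def rotate_rotate)
  show "rotations w \<subseteq> rotations (rotate k w)"
  proof
    fix v assume "v \<in> rotations w"
    then obtain j where "v = rotate j w" by (auto simp: rotations_def)
    also have "\<dots> = rotate (j + (length w - k mod length w)) (rotate k w)"
      by (simp add: rotate_inverse flip: rotate_rotate)
    finally show "v \<in> rotations (rotate k w)" by simp
  qed
qed

lemma rotations_eq:
  assumes "v \<in> rotations w"
  shows "rotations v = rotations w"
proof -
  from assms obtain k where "v = rotate k w" by (auto simp: rotations_def)
  then show ?thesis by simp
qed

lemma map_rotations: "map f ` rotations w = rotations (map f w)"
  by (auto simp: rotations_def rotate_map)

lemma rotations_conv_lessThan:
  assumes "w \<noteq> []"
  shows "rotations w = (\<lambda>k. rotate k w) ` {..<length w}"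
proof -
  have "rotate k w \<in> (\<lambda>k. rotate k w) ` {..<length w}" for k
    using assms by (subst rotate_conv_mod) simp
  then show ?thesis by (auto simp: rotations_def)
qed

lemma inj_on_add_mod: "inj_on (\<lambda>k. (k + i) mod n) {..<n :: nat}"
proof (rule inj_onI)
  fix x y assume "x \<in> {..<n}" "y \<in> {..<n}" "(x + i) mod n = (y + i) mod n"
  then show "x = y"
    by (metis cong_add_rcancel_nat cong_def cong_less_modulus_unique_nat lessThan_iff)
qed

lemma card_rotate_fibre_le:
  "card {k. k < length w \<and> rotate k w = v} \<le> card {k. k < length w \<and> rotate k w = rotate i v}"
proof (rule card_inj_on_le)
  let ?n = "length w"
  show "inj_on (\<lambda>k. (k + i) mod ?n) {k. k < ?n \<and> rotate k w = v}"
    by (rule inj_on_subset[OF inj_on_add_mod]) auto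
  show "(\<lambda>k. (k + i) mod ?n) ` {k. k < ?n \<and> rotate k w = v} \<subseteq> {k. k < ?n \<and> rotate k w = rotate i v}"
    by (auto simp: rotate_rotate add.commute simp flip: rotate_conv_mod intro: mod_less_divisor)
qed simp

lemma card_rotate_fibre:
  "card {k. k < length w \<and> rotate k w = rotate i w} = card {k. k < length w \<and> rotate k w = w}"
proof (rule antisym)
  show "card {k. k < length w \<and> rotate k w = rotate i w} \<le> card {k. k < length w \<and> rotate k w = w}"
    using card_rotate_fibre_le[of w "rotate i w" "length w - i mod length w"] by (simp add: rotate_inverse)
qed (rule card_rotate_fibre_le)

lemma card_rotations_mult_card_stabilizer:
  assumes "w \<noteq> []"
  shows "card (rotations w) * card {k. k < length w \<and> rotate k w = w} = length w"
proof -
  let ?n = "length w"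
  have "?n = card {..<?n}" by simp
  also have "\<dots> = (\<Sum>v\<in>(\<lambda>k. rotate k w) ` {..<?n}. card {k. k < ?n \<and> rotate k w = v})"
    using sum.image_gen[of "{..<?n}" "\<lambda>_. 1::nat" "\<lambda>k. rotate k w"] by simp
  also have "\<dots> = (\<Sum>v\<in>rotations w. card {k. k < ?n \<and> rotate k w = w})"
    by (rule sum.cong) (auto simp: rotations_conv_lessThan[OF assms] card_rotate_fibre)
  finally show ?thesis by simp
qed

lemma card_rotate_eq_map_rotate:
  "card {j. j < length w \<and> rotate j (rotate i w) = map f (rotate i w)}
     = card {j. j < length w \<and> rotate j w = map f w}"
proof -
  have "rotate j (rotate i w) = map f (rotate i w) \<longleftrightarrow> rotate j w = map f w" for j
    using inj_rotate[of i, THEN inj_eq]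
    by (metis rotate_map rotate_rotate add.commute)
  then show ?thesis by simp
qed

lemma sum_rotations_card_rotate_eq_map:
  assumes "w \<noteq> []"
  shows "(\<Sum>v\<in>rotations w. card {j. j < length w \<and> rotate j v = map f v})
           = (if map f ` rotations w = rotations w then length w else 0)"
proof -
  let ?h = "\<lambda>v. card {j. j < length w \<and> rotate j v = map f v}"
  have "?h v = ?h w" if "v \<in> rotations w" for v
    using that card_rotate_eq_map_rotate[of w] by (auto simp: rotations_def)
  then have "(\<Sum>v\<in>rotations w. ?h v) = (\<Sum>v\<in>rotations w. ?h w)"
    by (rule sum.cong[OF refl])
  also have "\<dots> = card (rotations w) * ?h w"
    by simp
  also have "\<dots> = (if map f w \<in> rotations w then length w else 0)"
  proof (cases "map f w \<in> rotations w")
    case True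
    then obtain t where "map f w = rotate t w" by (auto simp: rotations_def)
    then show ?thesis
      using card_rotations_mult_card_stabilizer[OF assms] by (simp add: card_rotate_fibre)
  next
    case False
    then have "{j. j < length w \<and> rotate j w = map f w} = {}"
      by (metis (mono_tags, lifting) empty_Collect_eq rotate_in_rotations)
    then show ?thesis using False by simp
  qed
  also have "map f w \<in> rotations w \<longleftrightarrow> map f ` rotations w = rotations w"
    by (metis image_eqI map_rotations rotations_eq self_in_rotations)
  finally show ?thesis .
qed

lemma sum_card_rotate_eq_map:
  fixes f :: "'a::finite \<Rightarrow> 'a"
  assumes "n > 0"
  shows "(\<Sum>j<n. card {w. length w = n \<and> rotate j w = map f w})
           = n * card {X \<in> rotations ` {w. length w = n}. map f ` X = X}"
proof -
  define L where "L = {w :: 'a list. length w = n}"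
  have fin: "finite L"
    unfolding L_def using finite_lists_length_eq[of "UNIV :: 'a set"] by simp
  have orbit: "{v \<in> L. rotations v = rotations w} = rotations w" if "w \<in> L" for w
  proof
    show "{v \<in> L. rotations v = rotations w} \<subseteq> rotations w"
      by (metis (mono_tags, lifting) mem_Collect_eq self_in_rotations subsetI)
    show "rotations w \<subseteq> {v \<in> L. rotations v = rotations w}"
      using that by (auto simp: L_def length_rotations rotations_eq)
  qed
  have "(\<Sum>j<n. card {w. length w = n \<and> rotate j w = map f w})
          = (\<Sum>j<n. card {w \<in> L. rotate j w = map f w})"
    by (simp add: L_def)
  also have "\<dots> = (\<Sum>w\<in>L. card {j \<in> {..<n}. rotate j w = map f w})"
    by (rule sum_multicount_gen) (auto simp: fin)
  also have "\<dots> = (\<Sum>X\<in>rotations ` L. \<Sum>w\<in>{v \<in> L. rotations v = X}. card {j \<in> {..<n}. rotate j w = map f w})"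
    by (rule sum.image_gen[OF fin])
  also have "\<dots> = (\<Sum>X\<in>rotations ` L. if map f ` X = X then n else 0)"
  proof (rule sum.cong)
    fix X assume "X \<in> rotations ` L"
    then obtain w where w: "w \<in> L" "X = rotations w" by blast
    then have "w \<noteq> []" using assms by (auto simp: L_def)
    then show "(\<Sum>v\<in>{v \<in> L. rotations v = X}. card {j \<in> {..<n}. rotate j v = map f v})
                 = (if map f ` X = X then n else 0)"
      using sum_rotations_card_rotate_eq_map[of w f] w orbit by (simp add: L_def)
  qed simp
  also have "\<dots> = n * card {X \<in> rotations ` L. map f ` X = X}"
    using fin by (simp add: sum.If_cases Int_def conj_commute)
  finally show ?thesis by (simp add: L_def)
qed

section \<open>Antiperiodic words, satisfying rotate g w = map Not w\<close>

lemma rotate_mult_antiperiod: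
  assumes "rotate j w = map Not w"
  shows "rotate (t * j) w = (if even t then w else map Not w)"
proof (induction t)
  case (Suc t)
  have "rotate (Suc t * j) w = rotate j (rotate (t * j) w)"
    by (simp add: rotate_rotate add.commute)
  with Suc assms show ?case by (auto simp: rotate_map comp_def)
qed simp

lemma nth_antiperiodic:
  assumes "rotate g w = map Not w" "i < length w"
  shows "w ! i = (if even (i div g) then w ! (i mod g) else \<not> w ! (i mod g))"
proof -
  have "i mod g < length w"
    using assms(2) by (meson le_less_trans mod_less_eq_dividend)
  then have "rotate (i div g * g) w ! (i mod g) = w ! i"
    using assms(2) by (simp add: nth_rotate)
  then show ?thesis
    using rotate_mult_antiperiod[OF assms(1), of "i div g"] \<open>i mod g < length w\<close>
    by (auto split: if_splits)
qed

lemma antiperiod_gcd_iff: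
  assumes "length w = n" "n > 0"
  shows "rotate j w = map Not w \<longleftrightarrow> even (n div gcd j n) \<and> rotate (gcd j n) w = map Not w"
proof -
  define g where "g = gcd j n"
  have period: "rotate (k * n) w = w" for k
    using assms(1) by simp
  have "map Not w \<noteq> w"
    using assms by (metis nth_map)
  have "n div g * j = j div g * n"
    unfolding g_def by (metis dvd_div_mult gcd_dvd1 gcd_dvd2 mult.commute div_mult_swap)
  have "rotate j w = map Not w \<longleftrightarrow> even (n div g) \<and> rotate g w = map Not w"
  proof
    assume anti: "rotate j w = map Not w"
    \<comment> \<open>rotating by \<open>n div g * j\<close>, a multiple of \<open>n\<close>, does nothing\<close>
    have "even (n div g)"
      using rotate_mult_antiperiod[OF anti, of "n div g"] period[of "j div g"] \<open>map Not w \<noteq> w\<close>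
        \<open>n div g * j = j div g * n\<close> by (auto split: if_splits)
    \<comment> \<open>Bezout: \<open>x * j\<close> is \<open>g\<close> modulo \<open>n\<close>, and \<open>x\<close> is odd because \<open>n div g\<close> is even\<close>
    moreover obtain x y where xy: "j * x = n * y + g"
      using bezout_nat[of j n] anti \<open>map Not w \<noteq> w\<close> by (cases "j = 0") (auto simp: g_def)
    have "(j div g * x) * g = (n div g * y + 1) * g"
      using xy by (simp add: g_def algebra_simps)
    then have "j div g * x = n div g * y + 1"
      using assms(2) by (metis g_def mult_cancel_right gcd_eq_0_iff less_not_refl)
    with \<open>even (n div g)\<close> have "odd x"
      by (metis even_add even_mult_iff odd_one)
    moreover have "rotate (x * j) w = rotate g w"
      using xy period[of y] by (metis add.commute mult.commute rotate_rotate)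
    ultimately show "even (n div g) \<and> rotate g w = map Not w"
      using rotate_mult_antiperiod[OF anti, of x] by simp
  next
    assume anti: "even (n div g) \<and> rotate g w = map Not w"
    moreover have "odd (j div g)"
      using anti assms(2) div_gcd_coprime[of j n] coprime_common_divisor[of "j div g" "n div g" 2]
      by (auto simp: g_def)
    ultimately show "rotate j w = map Not w"
      using rotate_mult_antiperiod[of g w "j div g"] by (simp add: g_def)
  qed
  then show ?thesis by (simp add: g_def)
qed

lemma append_concat_replicate_append:
  "y @ concat (replicate k (x @ y)) @ x = concat (replicate (Suc k) (y @ x))"
  by (induction k) auto

lemma rotate_concat_replicate:
  "rotate (length x) (concat (replicate k (x @ y))) = concat (replicate k (y @ x))"
proof (cases k)
  case (Suc m)
  then have "concat (replicate k (x @ y)) = x @ (y @ concat (replicate m (x @ y)))"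
    by simp
  then show ?thesis
    using Suc by (simp only: rotate_append append_concat_replicate_append append_assoc)
qed simp

lemma rotate_concat_replicate_map_Not:
  "rotate (length x) (concat (replicate k (x @ map Not x)))
     = map Not (concat (replicate k (x @ map Not x)))"
  using rotate_concat_replicate[where x = x and y = "map Not x" and k = k]
  by (simp add: map_concat comp_def)

lemma antiperiodic_eqI:
  assumes "rotate g u = map Not u" "rotate g v = map Not v" "length u = length v"
    and "take g u = take g v" "g > 0"
  shows "u = v"
proof (rule nth_equalityI)
  fix i assume "i < length u"
  moreover have "u ! (i mod g) = v ! (i mod g)"
    using assms(4,5) by (metis mod_less_divisor nth_take)
  ultimately show "u ! i = v ! i"
    using nth_antiperiodic[OF assms(1), of i] nth_antiperiodic[OF assms(2), of i] assms(3) by simp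
qed (fact assms(3))

lemma card_antiperiodic:
  assumes "g > 0" "even q" "q > 0"
  shows "card {w. length w = q * g \<and> rotate g w = map Not w} = 2 ^ g"
proof -
  let ?A = "{w. length w = q * g \<and> rotate g w = map Not w}"
  have "take g ` ?A = {x. length x = g}"
  proof
    show "take g ` ?A \<subseteq> {x. length x = g}"
      using assms by auto
    show "{x. length x = g} \<subseteq> take g ` ?A"
    proof
      fix x :: "bool list" assume x: "x \<in> {x. length x = g}"
      have "q div 2 > 0"
        using assms(2,3) by auto
      then obtain m where "q div 2 = Suc m"
        using gr0_implies_Suc by blast
      define w where "w = concat (replicate (q div 2) (x @ map Not x))"
      have "rotate g w = map Not w"
        using x rotate_concat_replicate_map_Not[of x "q div 2"] by (simp add: w_def)
      moreover have "length w = q * g"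
        using x assms(2) by (auto simp: w_def length_concat sum_list_replicate elim!: evenE)
      moreover have "take g w = x"
        using x \<open>q div 2 = Suc m\<close> by (simp add: w_def)
      ultimately show "x \<in> take g ` ?A" by force
    qed
  qed
  moreover have "inj_on (take g) ?A"
  proof (rule inj_onI)
    fix u v assume u: "u \<in> ?A" and v: "v \<in> ?A" and "take g u = take g v"
    show "u = v"
      by (rule antiperiodic_eqI[where g = g]) (use u v \<open>take g u = take g v\<close> assms(1) in simp_all)
  qed
  ultimately have "bij_betw (take g) ?A {x. length x = g}"
    by (simp add: bij_betw_def)
  then have "card ?A = card {x :: bool list. length x = g}"
    by (rule bij_betw_same_card)
  then show ?thesis
    using card_lists_length_eq[of "UNIV :: bool set" g] by simp
qed

lemma card_rotate_eq_map_Not: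
  assumes "n > 0"
  shows "card {w. length w = n \<and> rotate j w = map Not w}
           = (if even (n div gcd j n) then 2 ^ gcd j n else 0)"
proof -
  define g where "g = gcd j n"
  have "rotate j w = map Not w \<longleftrightarrow> even (n div g) \<and> rotate g w = map Not w"
    if "length w = n" for w
    using antiperiod_gcd_iff[OF that assms, of j] unfolding g_def .
  then have "{w. length w = n \<and> rotate j w = map Not w}
               = (if even (n div g) then {w. length w = n \<and> rotate g w = map Not w} else {})"
    by auto
  moreover have "n div g * g = n" "n div g > 0" "g > 0"
    using assms by (simp_all add: g_def div_greater_zero_iff gcd_le2_nat)
  ultimately show ?thesis
    using card_antiperiodic[of g "n div g"] unfolding g_def[symmetric] by simp
qed

section \<open>The 2-adic valuation of the divisor sum\<close>

lemma sum_gcd_eq_sum_divisors: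
  fixes F :: "nat \<Rightarrow> 'a::semiring_1"
  assumes "n > 0"
  shows "(\<Sum>j<n. F (gcd j n)) = (\<Sum>g | g dvd n. of_nat (totient (n div g)) * F g)"
proof -
  have "(\<Sum>j<n. F (gcd j n)) = (\<Sum>j\<in>{0<..n}. F (gcd j n))"
    by (rule sum.reindex_bij_witness[where i = "\<lambda>j. j mod n" and j = "\<lambda>j. if j = 0 then n else j"])
       (use assms in \<open>auto simp: le_less\<close>)
  also have "\<dots> = (\<Sum>g | g dvd n. \<Sum>j\<in>{j \<in> {0<..n}. gcd j n = g}. F (gcd j n))"
    by (rule sum.group[symmetric]) (use assms in auto)
  also have "\<dots> = (\<Sum>g | g dvd n. of_nat (totient (n div g)) * F g)"
  proof (rule sum.cong)
    fix g assume "g \<in> {g. g dvd n}"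
    then have "card {j \<in> {0<..n}. gcd j n = g} = totient (n div g)"
      using assms card_gcd_eq_totient[of n g] by simp
    then show "(\<Sum>j\<in>{j \<in> {0<..n}. gcd j n = g}. F (gcd j n)) = of_nat (totient (n div g)) * F g"
      by simp
  qed simp
  finally show ?thesis .
qed

lemma two_pow_multiplicity_dvd_totient: "2 ^ (multiplicity 2 n - 1) dvd totient n"
proof (cases "multiplicity 2 n")
  case (Suc k)
  have "totient (2 ^ Suc k) dvd totient n"
    using multiplicity_dvd[of 2 n] Suc by (intro totient_dvd) simp
  then show ?thesis
    using Suc totient_prime_power[of 2 "Suc k"] by simp
qed simp

lemma add_two_le_two_power: "2 \<le> r \<Longrightarrow> r + 2 \<le> (2::nat) ^ r"
  by (induction r rule: dec_induct) auto

lemma two_pow_dvd_totient_mult_two_pow: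
  assumes "e * g = n" "even e" "g \<ge> 3"
  shows "2 ^ (multiplicity 2 n + 1) dvd totient e * 2 ^ g"
proof (cases "e = 0")
  case False
  define t where "t = multiplicity 2 e"
  define r where "r = multiplicity 2 g"
  have "multiplicity 2 n = t + r"
    using assms False prime_elem_multiplicity_mult_distrib[of "2::nat" e g]
    by (simp add: t_def r_def)
  have "t \<ge> 1"
    using assms(2) False by (simp add: t_def multiplicity_gt_zero_iff Suc_le_eq)
  have "2 ^ r \<le> g"
    using assms(3) by (simp add: r_def dvd_imp_le multiplicity_dvd)
  then have "r + 2 \<le> g"
    using assms(3) add_two_le_two_power[of r] by (cases "r \<le> 1") auto
  have "2 ^ (t - 1) * 2 ^ (r + 2) dvd totient e * 2 ^ g"
    using two_pow_multiplicity_dvd_totient[of e] le_imp_power_dvd[OF \<open>r + 2 \<le> g\<close>, of 2]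
    unfolding t_def by (rule mult_dvd_mono)
  moreover have "t - 1 + (r + 2) = multiplicity 2 n + 1"
    using \<open>multiplicity 2 n = t + r\<close> \<open>t \<ge> 1\<close> by simp
  then have "(2::nat) ^ (t - 1) * 2 ^ (r + 2) = 2 ^ (multiplicity 2 n + 1)"
    by (simp only: power_add[symmetric])
  ultimately show ?thesis by (simp only:)
qed simp

lemma two_pow_dvd_small_divisor_terms:
  assumes "d > 1"
  shows "2 ^ (multiplicity 2 d + 2) dvd totient (2 * d) * 2 + totient d * (if even d then 4 else 0)"
proof (cases "even d")
  case True
  then have "multiplicity 2 d \<ge> 1"
    using assms by (simp add: multiplicity_gt_zero_iff Suc_le_eq)
  then have "(2::nat) ^ (multiplicity 2 d + 2) = 2 ^ 3 * 2 ^ (multiplicity 2 d - 1)"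
    by (cases "multiplicity 2 d") simp_all
  then show ?thesis
    using True two_pow_multiplicity_dvd_totient[of d] by (simp add: totient_double)
next
  case False
  with assms have "d > 2"
    by (cases "d = 2") auto
  with False have "multiplicity 2 d = 0" and "even (totient d)"
    by (auto simp: not_dvd_imp_multiplicity_0 intro!: totient_even)
  then show ?thesis
    using False by (simp add: totient_double)
qed

lemma two_pow_dvd_sum_antiperiodic:
  assumes "d > 1"
  shows "2 ^ (multiplicity 2 d + 2)
           dvd (\<Sum>g | g dvd 2 * d. totient (2 * d div g) * (if even (2 * d div g) then 2 ^ g else 0))"
proof -
  define a where "a = multiplicity 2 d"
  define T where "T g = totient (2 * d div g) * (if even (2 * d div g) then 2 ^ g else 0)" for g
  define D where "D = {g. g dvd 2 * d}"
  have "multiplicity 2 (2 * d) = a + 1"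
    using assms prime_elem_multiplicity_mult_distrib[of "2::nat" 2 d] by (simp add: a_def)
  have "{1, 2} \<subseteq> D" "finite D"
    using assms by (auto simp: D_def)
  then have split: "sum T D = sum T (D - {1, 2}) + (T 1 + T 2)"
    using sum.subset_diff[of "{1, 2}" D T] by simp
  have "2 ^ (a + 2) dvd T g" if "g \<in> D - {1, 2}" for g
  proof (cases "even (2 * d div g)")
    case True
    have "g > 0"
      using that assms by (auto simp: D_def intro: dvd_pos_nat[of "2 * d"])
    with that have "g \<ge> 3"
      by (auto simp: D_def)
    moreover have "2 * d div g * g = 2 * d"
      using that by (simp add: D_def)
    ultimately show ?thesis
      using two_pow_dvd_totient_mult_two_pow[of "2 * d div g" g "2 * d"] True
        \<open>multiplicity 2 (2 * d) = a + 1\<close> by (simp add: T_def)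
  qed (simp add: T_def)
  then have "2 ^ (a + 2) dvd sum T (D - {1, 2})"
    by (rule dvd_sum)
  moreover have "T 1 + T 2 = totient (2 * d) * 2 + totient d * (if even d then 4 else 0)"
    by (simp add: T_def)
  then have "2 ^ (a + 2) dvd T 1 + T 2"
    using two_pow_dvd_small_divisor_terms[OF assms] by (simp only: a_def)
  ultimately show ?thesis
    using split by (simp add: T_def D_def a_def)
qed

lemma count_list_rotate1: "count_list (rotate1 w) x = count_list w x"
  by (cases w) simp_all

lemma count_list_rotate: "count_list (rotate k w) x = count_list w x"
  by (induction k) (simp_all add: count_list_rotate1)

lemma necklaces_eq_rotations: "necklaces d = rotations ` balanced_words d"
proof -
  have "rot_rel d `` {w} = rotations w" if "w \<in> balanced_words d" for w
    using that by (auto simp: rot_rel_def rotations_def balanced_words_def count_list_rotate)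
  then show ?thesis
    unfolding necklaces_def quotient_def by auto
qed

lemma finite_necklaces: "finite (necklaces d)"
proof -
  have "balanced_words d \<subseteq> {w. length w = 2 * d}"
    by (auto simp: balanced_words_def)
  then show ?thesis
    using finite_lists_length_eq[of "UNIV :: bool set"]
    by (auto simp: necklaces_eq_rotations intro: finite_subset)
qed

lemma count_list_True_False: "count_list w True + count_list w False = length w"
proof -
  have "sum (count_list w) (UNIV :: bool set) = length w"
    by (rule sum_count_set) simp_all
  then show ?thesis
    by (simp add: UNIV_bool add.commute)
qed

lemma count_list_map_Not: "count_list (map Not w) True = count_list w False"
  using count_list_map_conv[of Not w False] by (simp add: inj_def)

lemma map_Not_in_balanced_words: "w \<in> balanced_words d \<Longrightarrow> map Not w \<in> balanced_words d"
  using count_list_True_False[of w] by (simp add: balanced_words_def count_list_map_Not)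

lemma map_Not_in_necklaces: "X \<in> necklaces d \<Longrightarrow> map Not ` X \<in> necklaces d"
  by (auto simp: necklaces_eq_rotations map_rotations map_Not_in_balanced_words)

lemma self_complementary_necklaces_eq:
  "{X \<in> necklaces d. map Not ` X = X} = {X \<in> rotations ` {w. length w = 2 * d}. map Not ` X = X}"
proof -
  have "w \<in> balanced_words d" if "length w = 2 * d" "map Not ` rotations w = rotations w" for w
  proof -
    from that(2) obtain k where "map Not w = rotate k w"
      by (metis image_eqI rotations_def rangeE self_in_rotations)
    then have "count_list w False = count_list w True"
      by (metis count_list_map_Not count_list_rotate)
    then show ?thesis
      using that(1) count_list_True_False[of w] by (simp add: balanced_words_def)
  qed
  then show ?thesis
    by (auto simp: necklaces_eq_rotations balanced_words_def)
qed

lemma card_self_complementary_necklaces: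
  assumes "d > 0"
  shows "2 * d * card {X \<in> necklaces d. map Not ` X = X}
           = (\<Sum>g | g dvd 2 * d. totient (2 * d div g) * (if even (2 * d div g) then 2 ^ g else 0))"
proof -
  have "2 * d * card {X \<in> necklaces d. map Not ` X = X}
          = (\<Sum>j<2 * d. card {w. length w = 2 * d \<and> rotate j w = map Not w})"
    using sum_card_rotate_eq_map[of "2 * d" Not] assms by (simp add: self_complementary_necklaces_eq)
  also have "\<dots> = (\<Sum>j<2 * d. if even (2 * d div gcd j (2 * d)) then 2 ^ gcd j (2 * d) else 0)"
    using assms by (simp add: card_rotate_eq_map_Not)
  also have "\<dots> = (\<Sum>g | g dvd 2 * d. totient (2 * d div g) * (if even (2 * d div g) then 2 ^ g else 0))"
    using assms sum_gcd_eq_sum_divisors[of "2 * d" "\<lambda>g. if even (2 * d div g) then 2 ^ g else 0 :: nat"]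
    by simp
  finally show ?thesis .
qed

lemma even_card_self_complementary_necklaces:
  assumes "d > 1"
  shows "even (card {X \<in> necklaces d. map Not ` X = X})"
proof -
  define a where "a = multiplicity 2 d"
  define S where "S = card {X \<in> necklaces d. map Not ` X = X}"
  obtain m where m: "d = 2 ^ a * m" "odd m"
    using multiplicity_decompose'[of d 2] assms by (auto simp: a_def)
  have "2 ^ (a + 2) dvd 2 * d * S"
    using two_pow_dvd_sum_antiperiodic[OF assms] card_self_complementary_necklaces[of d] assms
    by (simp add: S_def a_def)
  then have "2 ^ (a + 1) * 2 dvd 2 ^ (a + 1) * (m * S)"
    by (simp add: m algebra_simps)
  then have "even (m * S)"
    by (subst (asm) nat_mult_dvd_cancel_disj) simp
  with m(2) show ?thesis
    by (simp add: S_def)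
qed

theorem lemma2p4:
  fixes d :: nat
  assumes "d > 2"
  shows "even (card (necklaces d))"
proof -
  have "even (card (necklaces d)) \<longleftrightarrow> even (card {X \<in> necklaces d. map Not ` X = X})"
    by (rule even_card_iff_even_card_fixpoints)
       (simp_all add: finite_necklaces map_Not_in_necklaces image_comp comp_def)
  with even_card_self_complementary_necklaces[of d] assms show ?thesis
    by simp
qed

end
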